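(* Assume the Continuum Hypothesis. Then there exists a maximal almost disjoint family $\mathcal A$ of infinite subsets of $\omega$, each member of which is not an IP-set, such that for every AP-set $B\subseteq\omega$ and every finite-to-one function $f:B\to\omega$ there exist an AP-set $C\subseteq B$ and $A\in\mathcal A$ with $f[C]\subseteq A$.
   Context: $\omega=\{0,1,2,\dots\}$. A set $A\subseteq\omega$ is an AP-set if it contains arithmetic progressions of every finite length. For $B\subseteq\omega$, $FS(B)$ denotes the set of all sums $\sum_{n\in F}n$ over nonempty finite subsets $F\subseteq B$. A set $A\subseteq\omega$ is an IP-set if there is an infinite $B\subseteq\omega$ with $FS(B)\subseteq A$. A family $\mathcal A$ of infinite subsets of $\omega$ is almost disjoint if any two distinct members have finite intersection, and maximal almost disjoint if moreover every infinite $D\subseteq\omega$ has infinite intersection with some member of $\mathcal A$. *)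

theory Defs
  imports Main "HOL-Library.Equipollence" "HOL-Library.Countable_Set"
begin

definition CH :: bool where
  "CH \<longleftrightarrow> (\<forall>X :: nat set set. countable X \<or> X \<approx> (UNIV :: nat set set))"

definition AP_set :: "nat set \<Rightarrow> bool" where
  "AP_set A \<longleftrightarrow> (\<forall>k. \<exists>a d. d > 0 \<and> (\<forall>i<k. a + i * d \<in> A))"

definition FS :: "nat set \<Rightarrow> nat set" where
  "FS B = {\<Sum>F | F. F \<subseteq> B \<and> finite F \<and> F \<noteq> {}}"

definition IP_set :: "nat set \<Rightarrow> bool" where
  "IP_set A \<longleftrightarrow> (\<exists>B. infinite B \<and> FS B \<subseteq> A)"

definition almost_disjoint :: "nat set set \<Rightarrow> bool" where
  "almost_disjoint \<A> \<longleftrightarrow> (\<forall>A\<in>\<A>. infinite A) \<and>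
     (\<forall>A\<in>\<A>. \<forall>A'\<in>\<A>. A \<noteq> A' \<longrightarrow> finite (A \<inter> A'))"

definition MAD :: "nat set set \<Rightarrow> bool" where
  "MAD \<A> \<longleftrightarrow> almost_disjoint \<A> \<and>
     (\<forall>D. infinite D \<longrightarrow> (\<exists>A\<in>\<A>. infinite (D \<inter> A)))"

definition finite_to_one_on :: "nat set \<Rightarrow> (nat \<Rightarrow> nat) \<Rightarrow> bool" where
  "finite_to_one_on B f \<longleftrightarrow> (\<forall>n. finite {x\<in>B. f x = n})"

end

theory Submission
  imports Defs
begin

(* Under CH the tasks "meet the infinite set D" and "map an AP-subset of B by the finite-to-one
   f into a member" can be listed in a well-order whose initial segments are countable.  A
   transfinite recursion answers each task with a set that is either an earlier member or a new
   thin set (every positive difference occurs only finitely often, so it is not an IP-set) almost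
   disjoint from the countably many earlier members.  For a task (B, f) the new set is glued from
   finite blocks f[Q_k], Q_k a k-term progression in B, whose values are more than k apart and avoid
   finitely many earlier members.  Such blocks exist unless B minus the preimage of finitely many
   earlier members is no longer an AP-set; then, AP-sets being partition regular by van der
   Waerden's theorem, an AP-subset of B is mapped into a single earlier member. *)

section \<open>Van der Waerden's theorem\<close>

text \<open>The bound \<open>d \<le> N\<close> is automatic for \<open>k \<ge> 2\<close>; it keeps the block steps of
  \<open>monochromatic_blocks\<close> in range when \<open>k = 1\<close>.\<close>
definition mono_ap :: "(nat \<Rightarrow> nat) \<Rightarrow> nat \<Rightarrow> nat \<Rightarrow> bool" where
  "mono_ap c N k \<longleftrightarrow> (\<exists>a d. 0 < d \<and> d \<le> N \<and> (\<forall>i<k. a + i * d < N \<and> c (a + i * d) = c a))"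

definition vdW_number :: "nat \<Rightarrow> nat \<Rightarrow> nat \<Rightarrow> bool" where
  "vdW_number k r N \<longleftrightarrow> (\<forall>c. card (c ` {..<N}) \<le> r \<longrightarrow> mono_ap c N k)"

definition focused :: "(nat \<Rightarrow> nat) \<Rightarrow> nat \<Rightarrow> nat \<Rightarrow> nat \<Rightarrow> bool" where
  "focused c k f col \<longleftrightarrow> (\<exists>a d. 0 < d \<and> a + k * d = f \<and> (\<forall>i<k. c (a + i * d) = col))"

text \<open>Colour focusing: \<open>r\<close> focused colours together with the colour of \<open>f\<close> would be
  \<open>r + 1\<close> colours, so for \<open>s = r\<close> only the first alternative remains.\<close>
definition focusing_number :: "nat \<Rightarrow> nat \<Rightarrow> nat \<Rightarrow> nat \<Rightarrow> bool" where
  "focusing_number k r s N \<longleftrightarrow> (\<forall>c. card (c ` {..<N}) \<le> r \<longrightarrow> mono_ap c N (Suc k) \<or>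
     (\<exists>f<N. \<exists>S. finite S \<and> card S = s \<and> c f \<notin> S \<and> (\<forall>col\<in>S. focused c k f col)))"

lemma vdW_number_pos: "vdW_number k r N \<Longrightarrow> 0 < N"
  unfolding vdW_number_def mono_ap_def by (auto elim!: allE[of _ id])

lemma mono_ap_shift:
  assumes "mono_ap (\<lambda>x. c (m + x)) n k" "m + n \<le> N"
  shows "mono_ap c N k"
proof -
  obtain a d where "0 < d" "d \<le> n" "\<forall>i<k. a + i * d < n \<and> c (m + (a + i * d)) = c (m + a)"
    using assms(1) unfolding mono_ap_def by blast
  with assms(2) show ?thesis
    unfolding mono_ap_def by (intro exI[of _ "m + a"] exI[of _ d]) (auto simp: add.assoc)
qed

lemma mono_ap_if_focused:
  assumes "focused c k f (c f)" "f < N" "0 < k"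
  shows "mono_ap c N (Suc k)"
proof -
  obtain a d where ad: "0 < d" "a + k * d = f" "\<forall>i<k. c (a + i * d) = c f"
    using assms(1) unfolding focused_def by blast
  have colour: "c (a + i * d) = c f" if "i \<le> k" for i
    using that ad(2,3) by (cases "i = k") auto
  have "a + i * d < N \<and> c (a + i * d) = c a" if "i < Suc k" for i
  proof
    have "a + i * d \<le> a + k * d" using that by simp
    thus "a + i * d < N" using ad(2) assms(2) by linarith
    show "c (a + i * d) = c a" using colour[of i] colour[of 0] that by simp
  qed
  moreover have "1 * d \<le> k * d" using assms(3) by (intro mult_le_mono1) simp
  hence "d \<le> N" using ad(2) assms(2) by linarith
  ultimately show ?thesis using ad(1) unfolding mono_ap_def by blast
qed

lemma focused_colour_in_range:
  assumes "focused c k f col" "0 < k" "f < N"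
  shows "col \<in> c ` {..<N}"
proof -
  obtain a d where ad: "a + k * d = f" "\<forall>i<k. c (a + i * d) = col"
    using assms(1) unfolding focused_def by blast
  have "c (a + 0 * d) = col" using ad(2) assms(2) by blast
  moreover have "a < N" using ad(1) assms(3) by linarith
  ultimately show ?thesis by force
qed

text \<open>Copying one block of length \<open>n\<close> along a progression of identical blocks
  turns a progression focused inside the block into one focused further out; the colour of
  \<open>f\<close> itself becomes focused with step \<open>D * n\<close>.\<close>
lemma focused_along_blocks:
  assumes blocks: "\<And>i t. i < k \<Longrightarrow> t < n \<Longrightarrow> c ((b + i * D) * n + t) = c (b * n + t)"
    and "0 < D" "f < n" and col: "col = c (b * n + f) \<or> focused (\<lambda>x. c (b * n + x)) k f col"
  shows "focused c k (b * n + f + k * D * n) col"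
proof -
  have "\<exists>a d. a + k * d = f \<and> (\<forall>i<k. c (b * n + (a + i * d)) = col)"
    using col
  proof
    assume "col = c (b * n + f)"
    thus ?thesis by (intro exI[of _ f] exI[of _ 0]) simp
  next
    assume "focused (\<lambda>x. c (b * n + x)) k f col"
    thus ?thesis unfolding focused_def by blast
  qed
  then obtain a d where ad: "a + k * d = f" "\<And>i. i < k \<Longrightarrow> c (b * n + (a + i * d)) = col"
    by blast
  have "c ((b * n + a) + i * (d + D * n)) = col" if "i < k" for i
  proof -
    have "a + i * d \<le> a + k * d" using that by simp
    hence "a + i * d < n" using ad(1) assms(3) by linarith
    have "(b * n + a) + i * (d + D * n) = (b + i * D) * n + (a + i * d)"
      by (simp add: algebra_simps)
    thus ?thesis using blocks[OF that \<open>a + i * d < n\<close>] ad(2)[OF that] by (simp only:)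
  qed
  moreover have "(b * n + a) + k * (d + D * n) = b * n + f + k * D * n"
    using ad(1) by (simp add: algebra_simps)
  moreover have "0 < d + D * n" using assms(2,3) by simp
  ultimately show ?thesis unfolding focused_def by blast
qed

lemma card_block_colours:
  fixes c :: "nat \<Rightarrow> nat"
  assumes "card (c ` {..<N}) \<le> r" "W * n \<le> N"
  shows "card ((\<lambda>b. to_nat (map (\<lambda>t. c (b * n + t)) [0..<n])) ` {..<W}) \<le> r ^ n"
proof -
  let ?L = "{xs. set xs \<subseteq> c ` {..<N} \<and> length xs = n}"
  have "b * n + t < N" if "b < W" "t < n" for b t
  proof -
    have "b * n + t < (b + 1) * n" using that(2) by simp
    also have "\<dots> \<le> W * n" using that(1) by (intro mult_le_mono1) simp
    finally show ?thesis using assms(2) by simp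
  qed
  hence "map (\<lambda>t. c (b * n + t)) [0..<n] \<in> ?L" if "b < W" for b
    using that by auto
  hence "(\<lambda>b. to_nat (map (\<lambda>t. c (b * n + t)) [0..<n])) ` {..<W} \<subseteq> to_nat ` ?L"
    by auto
  moreover have "finite ?L" by (intro finite_lists_length_eq) simp
  ultimately have "card ((\<lambda>b. to_nat (map (\<lambda>t. c (b * n + t)) [0..<n])) ` {..<W}) \<le> card ?L"
    by (meson card_image_le card_mono finite_imageI le_trans)
  also have "\<dots> = card (c ` {..<N}) ^ n" by (intro card_lists_length_eq) simp
  also have "\<dots> \<le> r ^ n" using assms(1) by (rule power_mono) simp
  finally show ?thesis .
qed

lemma monochromatic_blocks:
  fixes c :: "nat \<Rightarrow> nat"
  assumes "vdW_number k (r ^ n) W" "card (c ` {..<2 * W * n}) \<le> r" "0 < k"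
  shows "\<exists>b D. 0 < D \<and> (b + k * D) * n + n \<le> 2 * W * n \<and>
    (\<forall>i<k. \<forall>t<n. c ((b + i * D) * n + t) = c (b * n + t))"
proof -
  define cb where "cb b = to_nat (map (\<lambda>t. c (b * n + t)) [0..<n])" for b
  have "card (cb ` {..<W}) \<le> r ^ n"
    unfolding cb_def by (rule card_block_colours[OF assms(2)]) simp
  hence "mono_ap cb W k" using assms(1) unfolding vdW_number_def by blast
  then obtain b D where bD: "0 < D" "D \<le> W" "\<forall>i<k. b + i * D < W \<and> cb (b + i * D) = cb b"
    unfolding mono_ap_def by blast
  have "k - 1 < k" using assms(3) by simp
  hence "b + (k - 1) * D < W" using bD(3) by blast
  moreover have "b + k * D = b + (k - 1) * D + D" using assms(3) by (cases k) auto
  ultimately have "b + k * D + 1 \<le> 2 * W" using bD(2) by linarith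
  hence "(b + k * D) * n + n \<le> 2 * W * n"
    by (metis add_mult_distrib mult_1 mult_le_mono1)
  moreover have "c ((b + i * D) * n + t) = c (b * n + t)" if "i < k" "t < n" for i t
  proof -
    have "map (\<lambda>t. c ((b + i * D) * n + t)) [0..<n] = map (\<lambda>t. c (b * n + t)) [0..<n]"
      using bD(3) that(1) unfolding cb_def by (auto dest: injD[OF inj_to_nat])
    thus ?thesis using that(2) by simp
  qed
  ultimately show ?thesis using bD(1) by blast
qed

lemma focusing_number_Suc:
  assumes "0 < k" "focusing_number k r s n" "vdW_number k (r ^ n) W"
  shows "focusing_number k r (Suc s) (2 * W * n)"
  unfolding focusing_number_def
proof (intro allI impI)
  fix c :: "nat \<Rightarrow> nat" assume cr: "card (c ` {..<2 * W * n}) \<le> r"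
  let ?N = "2 * W * n"
  obtain b D where bD: "0 < D" "(b + k * D) * n + n \<le> ?N"
    and blocks: "\<And>i t. i < k \<Longrightarrow> t < n \<Longrightarrow> c ((b + i * D) * n + t) = c (b * n + t)"
    using monochromatic_blocks[OF assms(3) cr assms(1)] by blast
  let ?c = "\<lambda>x. c (b * n + x)"
  have "b * n \<le> (b + k * D) * n" by simp
  hence "b * n + n \<le> ?N" using bD(2) by linarith
  hence "?c ` {..<n} \<subseteq> c ` {..<?N}" by auto
  hence "card (?c ` {..<n}) \<le> card (c ` {..<?N})" by (intro card_mono) auto
  hence "mono_ap ?c n (Suc k) \<or> (\<exists>f<n. \<exists>S. finite S \<and> card S = s \<and>
      ?c f \<notin> S \<and> (\<forall>col\<in>S. focused ?c k f col))"
    using assms(2) cr unfolding focusing_number_def by (meson le_trans)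
  thus "mono_ap c ?N (Suc k) \<or> (\<exists>F<?N. \<exists>S'. finite S' \<and> card S' = Suc s \<and> c F \<notin> S' \<and>
    (\<forall>col\<in>S'. focused c k F col))"
  proof
    assume "mono_ap ?c n (Suc k)"
    thus ?thesis using mono_ap_shift \<open>b * n + n \<le> ?N\<close> by blast
  next
    assume "\<exists>f<n. \<exists>S. finite S \<and> card S = s \<and> ?c f \<notin> S \<and> (\<forall>col\<in>S. focused ?c k f col)"
    then obtain f S where f: "f < n" and S: "finite S" "card S = s" "?c f \<notin> S"
      and foc: "\<And>col. col \<in> S \<Longrightarrow> focused ?c k f col" by blast
    define F where "F = b * n + f + k * D * n"
    define S' where "S' = insert (?c f) S"
    have "F < (b + k * D) * n + n" unfolding F_def using f by (simp add: algebra_simps)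
    hence "F < ?N" using bD(2) by linarith
    have foc': "focused c k F col" if "col \<in> S'" for col
      using focused_along_blocks[OF blocks bD(1) f] that foc unfolding F_def S'_def by blast
    show ?thesis
    proof (cases "c F \<in> S'")
      case True
      thus ?thesis using mono_ap_if_focused[OF foc' \<open>F < ?N\<close> assms(1)] by blast
    next
      case False
      moreover have "finite S'" "card S' = Suc s" using S unfolding S'_def by simp_all
      ultimately show ?thesis using \<open>F < ?N\<close> foc' by blast
    qed
  qed
qed

lemma focusing_number_exists:
  assumes "0 < k" "\<And>r. \<exists>W. vdW_number k r W"
  shows "\<exists>N>0. focusing_number k r s N"
proof (induction s)
  case 0
  have "\<exists>f<1. \<exists>S. finite S \<and> card S = 0 \<and> c f \<notin> S \<and> (\<forall>col\<in>S. focused c k f col)" for c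
    by (intro exI[of _ 0] conjI exI[of _ "{}"]) auto
  hence "focusing_number k r 0 1" unfolding focusing_number_def by blast
  thus ?case by blast
next
  case (Suc s)
  then obtain n where "0 < n" "focusing_number k r s n" by blast
  moreover obtain W where W: "vdW_number k (r ^ n) W" using assms(2) by blast
  ultimately have "focusing_number k r (Suc s) (2 * W * n)"
    using focusing_number_Suc[OF assms(1)] by blast
  moreover have "0 < 2 * W * n"
    using vdW_number_pos[OF W] \<open>0 < n\<close> by simp
  ultimately show ?case by blast
qed

lemma vdW_number_Suc:
  assumes "0 < k" "focusing_number k r r N"
  shows "vdW_number (Suc k) r N"
  unfolding vdW_number_def
proof (intro allI impI)
  fix c :: "nat \<Rightarrow> nat" assume cr: "card (c ` {..<N}) \<le> r"
  show "mono_ap c N (Suc k)"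
  proof (rule ccontr)
    assume "\<not> mono_ap c N (Suc k)"
    then obtain f S where "f < N" "finite S" "card S = r" "c f \<notin> S" "\<forall>col\<in>S. focused c k f col"
      using assms(2) cr unfolding focusing_number_def by blast
    hence "insert (c f) S \<subseteq> c ` {..<N}" using focused_colour_in_range[OF _ assms(1)] by blast
    hence "card (insert (c f) S) \<le> card (c ` {..<N})" by (intro card_mono) auto
    thus False using cr \<open>finite S\<close> \<open>card S = r\<close> \<open>c f \<notin> S\<close> by simp
  qed
qed

theorem van_der_Waerden: "\<exists>N. vdW_number k r N"
proof (cases k)
  case 0
  have "vdW_number 0 r 1" unfolding vdW_number_def mono_ap_def by auto
  thus ?thesis using 0 by blast
next
  case (Suc k')
  have "\<forall>r. \<exists>N. vdW_number (Suc k') r N"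
  proof (induction k')
    case 0
    have "vdW_number (Suc 0) r 1" for r unfolding vdW_number_def mono_ap_def by auto
    thus ?case by blast
  next
    case (Suc k')
    have "\<exists>N. focusing_number (Suc k') r r N" for r
      using focusing_number_exists[OF zero_less_Suc] Suc.IH by blast
    thus ?case using vdW_number_Suc[OF zero_less_Suc] by blast
  qed
  thus ?thesis using Suc by blast
qed

section \<open>Partition regularity of AP-sets\<close>

lemma AP_set_mono: "AP_set X \<Longrightarrow> X \<subseteq> Y \<Longrightarrow> AP_set Y"
  unfolding AP_set_def by (meson subsetD)

lemma not_AP_set_empty: "\<not> AP_set {}"
  unfolding AP_set_def by (meson empty_iff zero_less_one)

lemma AP_set_Diff_finite:
  assumes "AP_set A" "finite F"
  shows "AP_set (A - F)"
  unfolding AP_set_def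
proof
  fix k
  obtain M where M: "\<forall>x\<in>F. x \<le> M"
    using assms(2) finite_nat_set_iff_bounded_le by auto
  obtain a d where ad: "0 < d" "\<And>i. i < M + 1 + k \<Longrightarrow> a + i * d \<in> A"
    using assms(1) unfolding AP_set_def by blast
  have "(a + (M + 1) * d) + i * d \<in> A - F" if "i < k" for i
  proof -
    have "n \<le> n * d" for n using ad(1) by simp
    from this[of "M + 1 + i"] have "M < a + (M + 1 + i) * d" by linarith
    hence "a + (M + 1 + i) * d \<notin> F" using M by auto
    moreover have "a + (M + 1 + i) * d \<in> A" using ad(2)[of "M + 1 + i"] that by simp
    moreover have "(a + (M + 1) * d) + i * d = a + (M + 1 + i) * d" by (simp add: algebra_simps)
    ultimately show ?thesis by (metis Diff_iff)
  qed
  thus "\<exists>a d. 0 < d \<and> (\<forall>i<k. a + i * d \<in> A - F)" using ad(1) by blast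
qed

lemma AP_set_Un_progression:
  assumes "AP_set (X \<union> Y)"
  shows "\<exists>a d. 0 < d \<and> ((\<forall>i<k. a + i * d \<in> X) \<or> (\<forall>i<k. a + i * d \<in> Y))"
proof -
  obtain N where N: "vdW_number k 2 N" using van_der_Waerden by blast
  obtain a0 d0 where ad0: "0 < d0" "\<And>j. j < N \<Longrightarrow> a0 + j * d0 \<in> X \<union> Y"
    using assms unfolding AP_set_def by blast
  define c where "c j = (if a0 + j * d0 \<in> X then 0 else 1 :: nat)" for j
  have "c ` {..<N} \<subseteq> {0, 1}" unfolding c_def by auto
  hence "card (c ` {..<N}) \<le> card {0, 1 :: nat}" by (intro card_mono) auto
  hence "mono_ap c N k" using N unfolding vdW_number_def by simp
  then obtain a d where ad: "0 < d" "\<And>i. i < k \<Longrightarrow> a + i * d < N \<and> c (a + i * d) = c a"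
    unfolding mono_ap_def by blast
  have "(\<forall>i<k. a0 + (a + i * d) * d0 \<in> X) \<or> (\<forall>i<k. a0 + (a + i * d) * d0 \<in> Y)"
  proof (cases "c a = 0")
    case True
    hence "a0 + (a + i * d) * d0 \<in> X" if "i < k" for i
      using ad(2)[OF that] unfolding c_def by (simp split: if_splits)
    thus ?thesis by blast
  next
    case False
    hence "a0 + (a + i * d) * d0 \<in> Y" if "i < k" for i
      using ad(2)[OF that] ad0(2)[of "a + i * d"] unfolding c_def by (auto split: if_splits)
    thus ?thesis by blast
  qed
  moreover have "a0 + (a + i * d) * d0 = (a0 + a * d0) + i * (d * d0)" for i
    by (simp add: algebra_simps)
  ultimately show ?thesis using ad(1) ad0(1) by (intro exI[of _ "a0 + a * d0"] exI[of _ "d * d0"]) simp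
qed

lemma AP_set_Un: "AP_set (X \<union> Y) \<Longrightarrow> AP_set X \<or> AP_set Y"
proof (rule ccontr)
  assume XY: "AP_set (X \<union> Y)" and "\<not> (AP_set X \<or> AP_set Y)"
  then obtain k1 k2 where k1: "\<not> (\<exists>a d. 0 < d \<and> (\<forall>i<k1. a + i * d \<in> X))"
    and k2: "\<not> (\<exists>a d. 0 < d \<and> (\<forall>i<k2. a + i * d \<in> Y))"
    unfolding AP_set_def by meson
  obtain a d where "0 < d" "(\<forall>i<max k1 k2. a + i * d \<in> X) \<or> (\<forall>i<max k1 k2. a + i * d \<in> Y)"
    using AP_set_Un_progression[OF XY] by blast
  thus False using k1 k2 by (meson less_max_iff_disj)
qed

lemma AP_set_UN:
  assumes "finite I" "AP_set (\<Union>i\<in>I. X i)"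
  shows "\<exists>i\<in>I. AP_set (X i)"
  using assms
proof (induction I rule: finite_induct)
  case empty
  thus ?case using not_AP_set_empty by simp
next
  case (insert j I)
  hence "AP_set (X j) \<or> AP_set (\<Union>i\<in>I. X i)" using AP_set_Un by simp
  thus ?case using insert.IH by blast
qed

lemma AP_set_vimage_Union:
  assumes "AP_set B" "finite \<A>" "\<not> AP_set (B - f -` \<Union>\<A>)"
  shows "\<exists>A\<in>\<A>. AP_set (B \<inter> f -` A)"
proof -
  have "B \<subseteq> (B - f -` \<Union>\<A>) \<union> (\<Union>A\<in>\<A>. B \<inter> f -` A)" by blast
  hence "AP_set ((B - f -` \<Union>\<A>) \<union> (\<Union>A\<in>\<A>. B \<inter> f -` A))" by (rule AP_set_mono[OF assms(1)])
  hence "AP_set (\<Union>A\<in>\<A>. B \<inter> f -` A)" using AP_set_Un assms(3) by blast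
  thus ?thesis using AP_set_UN[OF assms(2)] by blast
qed

section \<open>Thin sets\<close>

definition thin :: "nat set \<Rightarrow> bool" where
  "thin A \<longleftrightarrow> (\<forall>x>0. finite {y\<in>A. x + y \<in> A})"

lemma thin_not_IP_set:
  assumes "thin A"
  shows "\<not> IP_set A"
proof
  assume "IP_set A"
  then obtain B where B: "infinite B" "FS B \<subseteq> A" unfolding IP_set_def by blast
  have sum_in: "\<Sum>F \<in> A" if "F \<subseteq> B" "finite F" "F \<noteq> {}" for F
    using that B(2) unfolding FS_def by blast
  have "infinite (B - {0})" using B(1) by simp
  then obtain x where x: "x \<in> B" "x \<noteq> 0" by (metis Diff_iff finite.emptyI insertI1 ex_in_conv)
  have "B - {x} \<subseteq> {y\<in>A. x + y \<in> A}"
  proof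
    fix y assume y: "y \<in> B - {x}"
    have "y \<in> A" using sum_in[of "{y}"] y by simp
    moreover have "x + y \<in> A" using sum_in[of "{x, y}"] x y by simp
    ultimately show "y \<in> {y\<in>A. x + y \<in> A}" by simp
  qed
  moreover have "finite {y\<in>A. x + y \<in> A}" using assms x(2) unfolding thin_def by simp
  ultimately have "finite (B - {x})" by (rule finite_subset)
  thus False using B(1) by simp
qed

lemma increasing_blocks_less:
  fixes I :: "nat \<Rightarrow> nat set"
  assumes ne: "\<And>k. I k \<noteq> {}" and incr: "\<And>k x y. x \<in> I k \<Longrightarrow> y \<in> I (Suc k) \<Longrightarrow> x + Suc k < y"
    and "x \<in> I j" "y \<in> I k" "j < k"
  shows "x + k < y"
  using assms(3-5)
proof (induction k arbitrary: y)
  case 0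
  thus ?case by simp
next
  case (Suc k)
  show ?case
  proof (cases "j = k")
    case True
    thus ?thesis using incr Suc.prems(1,2) by simp
  next
    case False
    hence "j < k" using Suc.prems(3) by simp
    obtain z where z: "z \<in> I k" using ne by blast
    have "x + k < z" using Suc.IH[OF Suc.prems(1) z \<open>j < k\<close>] .
    moreover have "z + Suc k < y" using incr[OF z Suc.prems(2)] .
    ultimately show ?thesis by simp
  qed
qed

lemma thin_UN_blocks:
  fixes I :: "nat \<Rightarrow> nat set"
  assumes fin: "\<And>k. finite (I k)" and ne: "\<And>k. I k \<noteq> {}"
    and gaps: "\<And>k x y. x \<in> I k \<Longrightarrow> y \<in> I k \<Longrightarrow> x < y \<Longrightarrow> k < y - x"
    and incr: "\<And>k x y. x \<in> I k \<Longrightarrow> y \<in> I (Suc k) \<Longrightarrow> x + Suc k < y"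
  shows "infinite (\<Union>k. I k)" "thin (\<Union>k. I k)"
proof -
  have later: "x + k < y" if "x \<in> I j" "y \<in> I k" "j < k" for x y j k
    using ne incr that by (rule increasing_blocks_less)
  show "infinite (\<Union>k. I k)"
    unfolding infinite_nat_iff_unbounded
  proof
    fix m
    obtain x z where "x \<in> I 0" "z \<in> I (Suc m)" using ne by blast
    hence "m < z" using later[of x 0 z "Suc m"] by simp
    thus "\<exists>z. m < z \<and> z \<in> (\<Union>k. I k)" using \<open>z \<in> I (Suc m)\<close> by blast
  qed
  show "thin (\<Union>k. I k)"
    unfolding thin_def
  proof (intro allI impI)
    fix x :: nat assume "0 < x"
    have "{y \<in> (\<Union>k. I k). x + y \<in> (\<Union>k. I k)} \<subseteq> (\<Union>j<x. I j)"
    proof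
      fix y assume "y \<in> {y \<in> (\<Union>k. I k). x + y \<in> (\<Union>k. I k)}"
      then obtain j k where jk: "y \<in> I j" "x + y \<in> I k" by blast
      have "k < x"
      proof (cases j k rule: linorder_cases)
        case less
        thus ?thesis using later[OF jk less] by simp
      next
        case equal
        thus ?thesis using gaps[of y k "x + y"] jk \<open>0 < x\<close> by simp
      next
        case greater
        thus ?thesis using later[OF jk(2,1) greater] by simp
      qed
      moreover have "j \<le> k" using later[OF jk(2,1)] by (cases "k < j") auto
      ultimately show "y \<in> (\<Union>j<x. I j)" using jk(1) by auto
    qed
    moreover have "finite (\<Union>j<x. I j)" using fin by simp
    ultimately show "finite {y \<in> (\<Union>k. I k). x + y \<in> (\<Union>k. I k)}" by (rule finite_subset)
  qed
qed

lemma increasing_blocks_choice: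
  fixes g :: "'q \<Rightarrow> nat set" and B :: "nat \<Rightarrow> nat \<Rightarrow> 'q \<Rightarrow> bool"
  assumes ex: "\<And>k M. \<exists>Q. B k M Q"
    and above: "\<And>k M Q. B k M Q \<Longrightarrow> finite (g Q) \<and> (\<forall>x\<in>g Q. M < x)"
  shows "\<exists>q. \<forall>k. (\<exists>M. B k M (q k)) \<and> (\<forall>x\<in>g (q k). \<forall>y\<in>g (q (Suc k)). x + Suc k < y)"
proof (rule dependent_nat_choice)
  show "\<exists>Q M. B 0 M Q" using ex by blast
next
  fix Q k assume "\<exists>M. B k M Q"
  hence "finite (g Q)" using above by blast
  obtain Q' where Q': "B (Suc k) (Max (g Q) + Suc k) Q'" using ex by blast
  have "x + Suc k < y" if "x \<in> g Q" "y \<in> g Q'" for x y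
  proof -
    have "x \<le> Max (g Q)" using \<open>finite (g Q)\<close> that(1) by simp
    moreover have "Max (g Q) + Suc k < y" using above[OF Q'] that(2) by blast
    ultimately show ?thesis by simp
  qed
  thus "\<exists>Q'. (\<exists>M. B (Suc k) M Q') \<and> (\<forall>x\<in>g Q. \<forall>y\<in>g Q'. x + Suc k < y)"
    using Q' by blast
qed

definition separated_block :: "nat \<Rightarrow> nat \<Rightarrow> nat set \<Rightarrow> bool" where
  "separated_block k M Y \<longleftrightarrow> finite Y \<and> Y \<noteq> {} \<and> (\<forall>x\<in>Y. M < x) \<and> (\<forall>x\<in>Y. \<forall>y\<in>Y. x < y \<longrightarrow> k < y - x)"

lemma thin_set_from_blocks:
  fixes g :: "'q \<Rightarrow> nat set" and P :: "nat \<Rightarrow> 'q \<Rightarrow> bool"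
  assumes "countable \<A>"
    and blocks: "\<And>k M \<F>. finite \<F> \<Longrightarrow> \<F> \<subseteq> \<A> \<Longrightarrow>
      \<exists>Q. P k Q \<and> separated_block k M (g Q) \<and> g Q \<inter> \<Union>\<F> = {}"
  shows "\<exists>q. (\<forall>k. P k (q k)) \<and> infinite (\<Union>k. g (q k)) \<and> thin (\<Union>k. g (q k)) \<and>
    (\<forall>A\<in>\<A>. finite (A \<inter> (\<Union>k. g (q k))))"
proof -
  define \<F> where "\<F> k = from_nat_into \<A> ` {..k} \<inter> \<A>" for k
  define block where
    "block k M Q \<longleftrightarrow> P k Q \<and> separated_block k M (g Q) \<and> g Q \<inter> \<Union>(\<F> k) = {}" for k M Q
  have block_exists: "\<exists>Q. block k M Q" for k M
    using blocks[of "\<F> k" k M] unfolding block_def \<F>_def by simp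
  have block_above: "finite (g Q) \<and> (\<forall>x\<in>g Q. M < x)" if "block k M Q" for k M Q
    using that unfolding block_def separated_block_def by blast
  have "\<exists>q. \<forall>k. (\<exists>M. block k M (q k)) \<and> (\<forall>x\<in>g (q k). \<forall>y\<in>g (q (Suc k)). x + Suc k < y)"
    using block_exists block_above by (rule increasing_blocks_choice)
  then obtain q where q_block: "\<And>k. \<exists>M. block k M (q k)"
    and q_incr: "\<And>k x y. x \<in> g (q k) \<Longrightarrow> y \<in> g (q (Suc k)) \<Longrightarrow> x + Suc k < y"
    by blast
  have P: "P k (q k)" and fin: "finite (g (q k))" and ne: "g (q k) \<noteq> {}"
    and avoid: "g (q k) \<inter> \<Union>(\<F> k) = {}"
    and gaps: "\<And>x y. x \<in> g (q k) \<Longrightarrow> y \<in> g (q k) \<Longrightarrow> x < y \<Longrightarrow> k < y - x" for k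
    using q_block[of k] unfolding block_def separated_block_def by blast+
  have "finite (A \<inter> (\<Union>k. g (q k)))" if A: "A \<in> \<A>" for A
  proof -
    obtain i where i: "from_nat_into \<A> i = A" using from_nat_into_surj[OF assms(1) A] by blast
    have "A \<inter> (\<Union>k. g (q k)) \<subseteq> (\<Union>k<i. g (q k))"
    proof
      fix y assume "y \<in> A \<inter> (\<Union>k. g (q k))"
      then obtain k where y: "y \<in> A" "y \<in> g (q k)" by blast
      have "k < i"
      proof (rule ccontr)
        assume "\<not> k < i"
        hence "A \<in> \<F> k" using i A unfolding \<F>_def by force
        thus False using avoid[of k] y by blast
      qed
      thus "y \<in> (\<Union>k<i. g (q k))" using y(2) by blast
    qed
    moreover have "finite (\<Union>k<i. g (q k))" using fin by simp
    ultimately show ?thesis by (rule finite_subset)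
  qed
  thus ?thesis using P thin_UN_blocks[of "\<lambda>k. g (q k)", OF fin ne gaps q_incr] by blast
qed

lemma infinite_imp_thin_subset:
  assumes "infinite D"
  shows "\<exists>A\<subseteq>D. infinite A \<and> thin A"
proof -
  have "\<exists>Q. Q \<subseteq> D \<and> separated_block k M Q \<and> Q \<inter> \<Union>\<F> = {}" if "\<F> \<subseteq> {}" for k M \<F>
  proof -
    obtain x where "M < x" "x \<in> D" using assms unfolding infinite_nat_iff_unbounded by blast
    thus ?thesis using that unfolding separated_block_def by (intro exI[of _ "{x}"]) auto
  qed
  from thin_set_from_blocks[of "{}" "\<lambda>k Q. Q \<subseteq> D" "\<lambda>Q. Q", OF countable_empty this]
  obtain q :: "nat \<Rightarrow> nat set" where "\<forall>k. q k \<subseteq> D" "infinite (\<Union>k. q k)" "thin (\<Union>k. q k)"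
    by blast
  thus ?thesis by (intro exI[of _ "\<Union>k. q k"]) blast
qed

lemma finite_to_one_on_subset:
  assumes "finite_to_one_on B f" "B' \<subseteq> B"
  shows "finite_to_one_on B' f"
proof -
  have "{x\<in>B'. f x = n} \<subseteq> {x\<in>B. f x = n}" for n using assms(2) by auto
  thus ?thesis using assms(1) unfolding finite_to_one_on_def by (metis finite_subset)
qed

lemma finite_to_one_on_finite_preimage:
  "finite_to_one_on B f \<Longrightarrow> finite {x\<in>B. f x \<le> M}"
proof -
  assume "finite_to_one_on B f"
  hence "finite (\<Union>m\<le>M. {x\<in>B. f x = m})" unfolding finite_to_one_on_def by simp
  moreover have "{x\<in>B. f x \<le> M} \<subseteq> (\<Union>m\<le>M. {x\<in>B. f x = m})" by auto
  ultimately show ?thesis by (rule finite_subset[rotated])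
qed

text \<open>All values of \<open>f\<close> on the block are congruent modulo \<open>k + 1\<close>, which separates them.\<close>
lemma AP_set_separated_block:
  assumes "AP_set B" "finite_to_one_on B f"
  shows "\<exists>Q\<subseteq>B. (\<exists>a d. 0 < d \<and> (\<forall>i<k. a + i * d \<in> Q)) \<and> separated_block k M (f ` Q)"
proof -
  define B' where "B' = B - {x\<in>B. f x \<le> M}"
  have "AP_set B'"
    unfolding B'_def by (rule AP_set_Diff_finite[OF assms(1) finite_to_one_on_finite_preimage[OF assms(2)]])
  moreover have "B' \<subseteq> (\<Union>j\<in>{..<Suc k}. {x\<in>B'. f x mod Suc k = j})" by auto
  ultimately have "AP_set (\<Union>j\<in>{..<Suc k}. {x\<in>B'. f x mod Suc k = j})" by (rule AP_set_mono)
  then obtain j where "AP_set {x\<in>B'. f x mod Suc k = j}"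
    using AP_set_UN[of "{..<Suc k}"] by blast
  then obtain a d where ad: "0 < d" "\<And>i. i < Suc k \<Longrightarrow> a + i * d \<in> {x\<in>B'. f x mod Suc k = j}"
    unfolding AP_set_def by blast
  define Q where "Q = (\<lambda>i. a + i * d) ` {..k}"
  have QB': "Q \<subseteq> {x\<in>B'. f x mod Suc k = j}" unfolding Q_def using ad(2) by auto
  have "k < y - x" if "x \<in> f ` Q" "y \<in> f ` Q" "x < y" for x y
  proof -
    have "x mod Suc k = y mod Suc k" using that(1,2) QB' by auto
    hence "Suc k dvd y - x" using mod_eq_dvd_iff_nat[of x y "Suc k"] that(3) by simp
    hence "Suc k \<le> y - x" by (rule dvd_imp_le) (use that(3) in simp)
    thus ?thesis by simp
  qed
  moreover have "Q \<subseteq> B" "\<forall>x\<in>f ` Q. M < x" using QB' unfolding B'_def by auto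
  moreover have "\<forall>i<k. a + i * d \<in> Q" unfolding Q_def by auto
  moreover have "finite (f ` Q)" "f ` Q \<noteq> {}" unfolding Q_def by auto
  ultimately show ?thesis using ad(1) unfolding separated_block_def by blast
qed

section \<open>Building the family under CH\<close>

text \<open>Reusing members is unavoidable: if \<open>D \<subseteq> A\<close> for a member \<open>A\<close>, no set almost
  disjoint from \<open>A\<close> meets \<open>D\<close> infinitely.\<close>
definition admissible :: "(nat set \<Rightarrow> bool) \<Rightarrow> nat set set \<Rightarrow> nat set \<Rightarrow> bool" where
  "admissible Q \<A> A \<longleftrightarrow> A \<in> \<A> \<or> (infinite A \<and> Q A \<and> (\<forall>A'\<in>\<A>. finite (A' \<inter> A)))"

lemma exists_admissible_meeting:
  assumes "countable \<A>" "infinite D"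
  shows "\<exists>A. admissible thin \<A> A \<and> infinite (D \<inter> A)"
proof (cases "\<exists>A\<in>\<A>. infinite (D \<inter> A)")
  case True
  thus ?thesis unfolding admissible_def by blast
next
  case False
  obtain A where A: "A \<subseteq> D" "infinite A" "thin A" using infinite_imp_thin_subset[OF assms(2)] by blast
  have "finite (A' \<inter> A)" if "A' \<in> \<A>" for A'
    using False that A(1) by (metis finite_subset inf.commute inf_mono order_refl)
  moreover have "D \<inter> A = A" using A(1) by blast
  ultimately show ?thesis using A unfolding admissible_def by auto
qed

lemma exists_admissible_AP_image:
  assumes "countable \<A>" "AP_set B" "finite_to_one_on B f"
  shows "\<exists>A. admissible thin \<A> A \<and> (\<exists>C\<subseteq>B. AP_set C \<and> f ` C \<subseteq> A)"
proof (cases "\<exists>\<F>. finite \<F> \<and> \<F> \<subseteq> \<A> \<and> \<not> AP_set (B - f -` \<Union>\<F>)")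
  case True
  then obtain \<F> where \<F>: "finite \<F>" "\<F> \<subseteq> \<A>" "\<not> AP_set (B - f -` \<Union>\<F>)" by blast
  then obtain A where "A \<in> \<F>" "AP_set (B \<inter> f -` A)" using AP_set_vimage_Union[OF assms(2)] by blast
  moreover have "admissible thin \<A> A" using \<F>(2) \<open>A \<in> \<F>\<close> unfolding admissible_def by blast
  moreover have "B \<inter> f -` A \<subseteq> B" "f ` (B \<inter> f -` A) \<subseteq> A" by auto
  ultimately show ?thesis by blast
next
  case False
  have "\<exists>Q. (Q \<subseteq> B \<and> (\<exists>a d. 0 < d \<and> (\<forall>i<k. a + i * d \<in> Q))) \<and>
      separated_block k M (f ` Q) \<and> f ` Q \<inter> \<Union>\<F> = {}"
    if "finite \<F>" "\<F> \<subseteq> \<A>" for k M \<F>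
  proof -
    have "AP_set (B - f -` \<Union>\<F>)" using False that by blast
    moreover have "finite_to_one_on (B - f -` \<Union>\<F>) f"
      using assms(3) by (rule finite_to_one_on_subset) blast
    ultimately obtain Q where "Q \<subseteq> B - f -` \<Union>\<F>" "\<exists>a d. 0 < d \<and> (\<forall>i<k. a + i * d \<in> Q)"
      "separated_block k M (f ` Q)"
      using AP_set_separated_block by metis
    thus ?thesis by (intro exI[of _ Q]) blast
  qed
  from thin_set_from_blocks[OF assms(1) this]
  obtain q :: "nat \<Rightarrow> nat set" where q: "\<forall>k. q k \<subseteq> B \<and> (\<exists>a d. 0 < d \<and> (\<forall>i<k. a + i * d \<in> q k))"
    and A: "infinite (\<Union>k. f ` q k)" "thin (\<Union>k. f ` q k)" "\<forall>A'\<in>\<A>. finite (A' \<inter> (\<Union>k. f ` q k))"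
    by blast
  have "AP_set (\<Union>k. q k)"
    unfolding AP_set_def
  proof
    fix k
    obtain a d where "0 < d" "\<forall>i<k. a + i * d \<in> q k" using q by blast
    thus "\<exists>a d. 0 < d \<and> (\<forall>i<k. a + i * d \<in> (\<Union>k. q k))" by blast
  qed
  moreover have "(\<Union>k. q k) \<subseteq> B" "f ` (\<Union>k. q k) \<subseteq> (\<Union>k. f ` q k)" using q by auto
  moreover have "admissible thin \<A> (\<Union>k. f ` q k)" using A unfolding admissible_def by blast
  ultimately show ?thesis by blast
qed

lemma CH_countable_or_eqpoll:
  assumes "CH" "X \<lesssim> (UNIV :: nat set set)"
  shows "countable X \<or> X \<approx> (UNIV :: nat set set)"
proof -
  obtain g :: "_ \<Rightarrow> nat set" where g: "inj_on g X" using assms(2) unfolding lepoll_def by blast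
  have "countable (g ` X) \<or> g ` X \<approx> (UNIV :: nat set set)" using assms(1) unfolding CH_def by blast
  moreover have "X \<approx> g ` X" using g by (simp add: eqpoll_sym inj_on_image_eqpoll_self)
  ultimately show ?thesis by (metis countable_image_inj_on eqpoll_trans g)
qed

lemma CH_wellorder_countable_segments:
  includes cardinal_syntax
  assumes "CH" "(UNIV :: 'a set) \<lesssim> (UNIV :: nat set set)"
  shows "\<exists>R :: ('a \<times> 'a) set. wf R \<and> total R \<and> (\<forall>t. countable {s. (s, t) \<in> R})"
proof -
  define r where "r = |UNIV :: 'a set|"
  have "Card_order r" unfolding r_def by (rule card_of_Card_order)
  have "Field r = UNIV" unfolding r_def by (rule Field_card_of)
  have "Well_order r" using \<open>Card_order r\<close> by (simp add: card_order_on_def)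
  hence "wf (r - Id)" by (simp add: well_order_on_def)
  have "total_on UNIV r"
    using \<open>Well_order r\<close> \<open>Field r = UNIV\<close> unfolding well_order_on_def linear_order_on_def by simp
  hence "total (r - Id)" unfolding total_on_def by simp
  have "r \<le>o |UNIV :: nat set set|" using assms(2) unfolding r_def lepoll_def card_of_ordLeq .
  have "countable {s. (s, t) \<in> r - Id}" for t
  proof -
    have "|underS r t| <o r" using card_of_underS[OF \<open>Card_order r\<close>] \<open>Field r = UNIV\<close> by simp
    have "\<not> underS r t \<approx> (UNIV :: nat set set)"
    proof
      assume "underS r t \<approx> (UNIV :: nat set set)"
      hence "|UNIV :: nat set set| =o |underS r t|"
        by (simp add: eqpoll_iff_card_of_ordIso ordIso_symmetric)
      hence "|UNIV :: nat set set| <o r" using \<open>|underS r t| <o r\<close> by (rule ordIso_ordLess_trans)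
      hence "|UNIV :: nat set set| <o |UNIV :: nat set set|"
        using \<open>r \<le>o |UNIV :: nat set set|\<close> by (rule ordLess_ordLeq_trans)
      thus False by (simp add: ordLess_irreflexive)
    qed
    moreover have "underS r t \<lesssim> (UNIV :: nat set set)"
      using lepoll_trans[OF subset_imp_lepoll[OF subset_UNIV] assms(2)] .
    ultimately have "countable (underS r t)" using CH_countable_or_eqpoll[OF assms(1)] by blast
    moreover have "{s. (s, t) \<in> r - Id} = underS r t" unfolding underS_def by blast
    ultimately show ?thesis by simp
  qed
  thus ?thesis using \<open>wf (r - Id)\<close> \<open>total (r - Id)\<close> by blast
qed

lemma wf_recursion_choice:
  fixes R :: "('t \<times> 't) set" and P :: "'a set \<Rightarrow> 't \<Rightarrow> 'a \<Rightarrow> bool"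
  assumes "wf R" and ex: "\<And>t (G :: 't \<Rightarrow> 'a). \<exists>y. P (G ` {s. (s, t) \<in> R}) t y"
  shows "\<exists>F. \<forall>t. P (F ` {s. (s, t) \<in> R}) t (F t)"
proof
  define F where "F = wfrec R (\<lambda>G t. SOME y. P (G ` {s. (s, t) \<in> R}) t y)"
  show "\<forall>t. P (F ` {s. (s, t) \<in> R}) t (F t)"
  proof
    fix t
    have "F t = (SOME y. P (cut F R t ` {s. (s, t) \<in> R}) t y)"
      unfolding F_def by (subst wfrec[OF assms(1)]) simp
    moreover have "cut F R t ` {s. (s, t) \<in> R} = F ` {s. (s, t) \<in> R}" by (auto simp: cut_apply)
    ultimately show "P (F ` {s. (s, t) \<in> R}) t (F t)" using someI_ex[OF ex] by simp
  qed
qed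

lemma almost_disjoint_range_admissible:
  fixes R :: "('t \<times> 't) set" and F :: "'t \<Rightarrow> nat set"
  assumes "wf R" "total R" and F: "\<And>t. admissible Q (F ` {s. (s, t) \<in> R}) (F t)"
  shows "almost_disjoint (range F) \<and> (\<forall>A\<in>range F. Q A)"
proof -
  define fresh where "fresh t \<longleftrightarrow> F t \<notin> F ` {s. (s, t) \<in> R}" for t
  have fresh_rep: "\<exists>s. fresh s \<and> A = F s" if "A \<in> range F" for A
  proof -
    obtain t where "A = F t" using \<open>A \<in> range F\<close> by blast
    obtain s where s: "F s = F t" and min: "\<And>s'. (s', s) \<in> R \<Longrightarrow> F s' \<noteq> F t"
      by (rule wfE_min[OF assms(1), of t "{s. F s = F t}"]) auto
    have "fresh s" unfolding fresh_def using s min by force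
    thus ?thesis using s \<open>A = F t\<close> by blast
  qed
  have fresh: "infinite (F t) \<and> Q (F t) \<and> (\<forall>s. (s, t) \<in> R \<longrightarrow> finite (F s \<inter> F t))"
    if "fresh t" for t
  proof -
    have "infinite (F t) \<and> Q (F t) \<and> (\<forall>A'\<in>F ` {s. (s, t) \<in> R}. finite (A' \<inter> F t))"
      using F[of t] that unfolding fresh_def admissible_def by blast
    thus ?thesis by auto
  qed
  have "almost_disjoint (range F)"
    unfolding almost_disjoint_def
  proof (intro conjI ballI impI)
    fix A assume "A \<in> range F"
    then obtain s where "fresh s" "A = F s" using fresh_rep by blast
    thus "infinite A" using fresh by blast
  next
    fix A A' assume "A \<in> range F" "A' \<in> range F" "A \<noteq> A'"
    obtain s t where st: "fresh s" "fresh t" "A = F s" "A' = F t"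
      using fresh_rep[OF \<open>A \<in> range F\<close>] fresh_rep[OF \<open>A' \<in> range F\<close>] by blast
    hence "s \<noteq> t" using \<open>A \<noteq> A'\<close> by blast
    hence "(s, t) \<in> R \<or> (t, s) \<in> R" using assms(2) unfolding total_on_def by blast
    thus "finite (A \<inter> A')"
    proof
      assume "(s, t) \<in> R"
      thus ?thesis using fresh[OF st(2)] st(3,4) by blast
    next
      assume "(t, s) \<in> R"
      hence "finite (F t \<inter> F s)" using fresh[OF st(1)] by blast
      thus ?thesis using st(3,4) by (simp add: Int_commute)
    qed
  qed
  moreover have "Q A" if "A \<in> range F" for A
    using fresh_rep[OF that] fresh by blast
  ultimately show ?thesis by blast
qed

lemma almost_disjoint_family_by_wf_recursion:
  fixes R :: "('t \<times> 't) set" and sat :: "'t \<Rightarrow> nat set \<Rightarrow> bool"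
  assumes "wf R" "total R" "\<And>t. countable {s. (s, t) \<in> R}"
    and step: "\<And>\<A> t. countable \<A> \<Longrightarrow> \<exists>A. admissible Q \<A> A \<and> sat t A"
  shows "\<exists>\<F>. almost_disjoint \<F> \<and> (\<forall>A\<in>\<F>. Q A) \<and> (\<forall>t. \<exists>A\<in>\<F>. sat t A)"
proof -
  have "\<exists>A. admissible Q (G ` {s. (s, t) \<in> R}) A \<and> sat t A" for t and G :: "'t \<Rightarrow> nat set"
    by (intro step countable_image assms(3))
  then obtain F where F: "\<And>t. admissible Q (F ` {s. (s, t) \<in> R}) (F t) \<and> sat t (F t)"
    using wf_recursion_choice[OF assms(1), of "\<lambda>\<A> t A. admissible Q \<A> A \<and> sat t A"] by blast
  hence "almost_disjoint (range F) \<and> (\<forall>A\<in>range F. Q A)"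
    using almost_disjoint_range_admissible[OF assms(1,2)] by blast
  thus ?thesis using F by blast
qed

type_synonym task = "nat set + nat set \<times> (nat \<Rightarrow> nat)"

definition met_by :: "task \<Rightarrow> nat set \<Rightarrow> bool" where
  "met_by t A \<longleftrightarrow> (case t of
     Inl D \<Rightarrow> infinite D \<longrightarrow> infinite (D \<inter> A)
   | Inr (B, f) \<Rightarrow> AP_set B \<and> finite_to_one_on B f \<longrightarrow> (\<exists>C\<subseteq>B. AP_set C \<and> f ` C \<subseteq> A))"

lemma task_lepoll_nat_sets: "(UNIV :: task set) \<lesssim> (UNIV :: nat set set)"
proof -
  define code :: "task \<Rightarrow> (nat \<times> nat) set" where
    "code t = (case t of Inl D \<Rightarrow> {0} \<times> D | Inr (B, f) \<Rightarrow> {1} \<times> B \<union> range (\<lambda>n. (n + 2, f n)))" for t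
  have "inj code"
  proof (rule injI)
    fix t t' assume eq: "code t = code t'"
    show "t = t'"
    proof (cases t; cases t')
      fix D D' assume "t = Inl D" "t' = Inl D'"
      thus ?thesis using eq unfolding code_def by auto
    next
      fix D p' assume t: "t = Inl D" "t' = Inr p'"
      obtain B' f' where "p' = (B', f')" by fastforce
      hence "(2, f' 0) \<in> code t'" "(2, f' 0) \<notin> code t" unfolding t code_def by auto
      thus ?thesis using eq by simp
    next
      fix p D' assume t: "t = Inr p" "t' = Inl D'"
      obtain B f where "p = (B, f)" by fastforce
      hence "(2, f 0) \<in> code t" "(2, f 0) \<notin> code t'" unfolding t code_def by auto
      thus ?thesis using eq by simp
    next
      fix p p' assume "t = Inr p" "t' = Inr p'"
      moreover obtain B f B' f' where "p = (B, f)" "p' = (B', f')" by fastforce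
      ultimately have t: "t = Inr (B, f)" "t' = Inr (B', f')" by simp_all
      have "x \<in> B \<longleftrightarrow> x \<in> B'" for x
        using eq[THEN equalityD1, THEN subsetD, of "(1, x)"] eq[THEN equalityD2, THEN subsetD, of "(1, x)"]
        unfolding t code_def by auto
      moreover have "f n = f' n" for n
        using eq[THEN equalityD1, THEN subsetD, of "(n + 2, f n)"] unfolding t code_def by auto
      ultimately show ?thesis using t by auto
    qed
  qed
  hence "inj (\<lambda>t. prod_encode ` code t)"
    by (simp add: inj_def inj_image_eq_iff[OF inj_prod_encode])
  thus ?thesis unfolding lepoll_def by blast
qed

lemma exists_admissible_met_by:
  assumes "countable \<A>"
  shows "\<exists>A. admissible thin \<A> A \<and> met_by t A"
proof (cases t)
  case (Inl D)
  thus ?thesis using exists_admissible_meeting[OF assms, of D] exists_admissible_meeting[OF assms, of UNIV]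
    unfolding met_by_def by auto
next
  case (Inr p)
  then obtain B f where t: "t = Inr (B, f)" by (cases p) auto
  show ?thesis
  proof (cases "AP_set B \<and> finite_to_one_on B f")
    case True
    thus ?thesis using exists_admissible_AP_image[OF assms, of B f] unfolding t met_by_def by auto
  next
    case False
    thus ?thesis using exists_admissible_meeting[OF assms, of UNIV] unfolding t met_by_def by auto
  qed
qed

theorem lemma2p1:
  assumes "CH"
  shows "\<exists>\<A>. MAD \<A> \<and> (\<forall>A\<in>\<A>. \<not> IP_set A) \<and>
           (\<forall>B f. AP_set B \<and> finite_to_one_on B f \<longrightarrow>
              (\<exists>C A. C \<subseteq> B \<and> AP_set C \<and> A \<in> \<A> \<and> f ` C \<subseteq> A))"
proof -
  obtain R :: "(task \<times> task) set" where R: "wf R" "total R" "\<And>t. countable {s. (s, t) \<in> R}"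
    using CH_wellorder_countable_segments[OF assms task_lepoll_nat_sets] by blast
  from almost_disjoint_family_by_wf_recursion[where Q = thin and sat = met_by, OF R exists_admissible_met_by]
  obtain \<A> where \<A>: "almost_disjoint \<A>" "\<forall>A\<in>\<A>. thin A" "\<forall>t. \<exists>A\<in>\<A>. met_by t A" by blast
  have "MAD \<A>" unfolding MAD_def using \<A>(1) \<A>(3)[rule_format, of "Inl _"] unfolding met_by_def by auto
  moreover have "\<forall>A\<in>\<A>. \<not> IP_set A" using \<A>(2) thin_not_IP_set by blast
  moreover have "\<exists>C A. C \<subseteq> B \<and> AP_set C \<and> A \<in> \<A> \<and> f ` C \<subseteq> A"
    if "AP_set B \<and> finite_to_one_on B f" for B f
    using \<A>(3)[rule_format, of "Inr (B, f)"] that unfolding met_by_def by auto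
  ultimately show ?thesis by blast
qed

end
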